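(* Let $x^{(0)}\in\mathbb R^n$, $h_0:=H(x^{(0)})$, let $\epsilon>0$ be small, and let $t_\epsilon$ be the unique solution of $f(t_\epsilon)=\epsilon$, where $f(t)=\frac1{h_0}\tanh(\frac{h_0t}2)$ if $h_0\ne0$ and $f(t)=t/2$ if $h_0=0$. Let $x(t)$ be the solution of $\dot x_i=x_i\big(\sum_{j>i}a_jx_j-\sum_{j<i}a_jx_j\big)$ with $x(0)=x^{(0)}$. Then $x(t_\epsilon)=\mathcal K(x^{(0)})$. Consequently, since $t_\epsilon$ depends on $x^{(0)}$ only through $H(x^{(0)})$ (which is preserved by $\mathcal K$), the $m$-th iterate satisfies $\mathcal K^m(x^{(0)})=x(mt_\epsilon)$ for all $m\ge0$, and every first integral of the continuous system is invariant under $\mathcal K$.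
   Context: $(a_1,\dots,a_n)\in\mathbb R^n\setminus\{0\}$, $H=a_1x_1+\dots+a_nx_n$, $v_0:=0$, $v_i:=a_1x_1+\dots+a_ix_i$. $\mathcal K$ is the Kahan map with step size $2\epsilon$: $\tilde x_i=x_i\dfrac{(1-\epsilon H)(1+\epsilon H)}{(1-\epsilon H+2\epsilon v_{i-1})(1-\epsilon H+2\epsilon v_i)}$, $i=1,\dots,n$ (points where denominators vanish or the solution ceases to exist are excluded). *)

theory Defs
  imports "HOL-Analysis.Analysis"
begin

text \<open>Coordinates are indexed by a finite linearly ordered type 'n (so n = CARD('n));
  the order on 'n plays the role of the order on the indices 1..n.\<close>

definition Ham :: "real^('n::{finite,linorder}) \<Rightarrow> real^('n::{finite,linorder}) \<Rightarrow> real" where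
  "Ham a x = (\<Sum>j\<in>UNIV. a$j * x$j)"

definition vle :: "real^('n::{finite,linorder}) \<Rightarrow> real^('n::{finite,linorder}) \<Rightarrow> 'n \<Rightarrow> real" where
  "vle a x i = (\<Sum>j\<in>{j. j \<le> i}. a$j * x$j)"

definition vlt :: "real^('n::{finite,linorder}) \<Rightarrow> real^('n::{finite,linorder}) \<Rightarrow> 'n \<Rightarrow> real" where
  "vlt a x i = (\<Sum>j\<in>{j. j < i}. a$j * x$j)"

text \<open>Kahan map with step size 2 eps.\<close>
definition kahan :: "real^('n::{finite,linorder}) \<Rightarrow> real \<Rightarrow> real^('n::{finite,linorder}) \<Rightarrow> real^('n::{finite,linorder})" where
  "kahan a eps x = (\<chi> i. x$i * ((1 - eps * Ham a x) * (1 + eps * Ham a x)) /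
      ((1 - eps * Ham a x + 2 * eps * vlt a x i) * (1 - eps * Ham a x + 2 * eps * vle a x i)))"

definition kahan_defined :: "real^('n::{finite,linorder}) \<Rightarrow> real \<Rightarrow> real^('n::{finite,linorder}) \<Rightarrow> bool" where
  "kahan_defined a eps x = (\<forall>i. 1 - eps * Ham a x + 2 * eps * vlt a x i \<noteq> 0 \<and>
                                 1 - eps * Ham a x + 2 * eps * vle a x i \<noteq> 0)"

definition field :: "real^('n::{finite,linorder}) \<Rightarrow> real^('n::{finite,linorder}) \<Rightarrow> real^('n::{finite,linorder})" where
  "field a x = (\<chi> i. x$i * ((\<Sum>j\<in>{j. i < j}. a$j * x$j) - (\<Sum>j\<in>{j. j < i}. a$j * x$j)))"

definition is_solution :: "real^('n::{finite,linorder}) \<Rightarrow> (real \<Rightarrow> real^('n::{finite,linorder})) \<Rightarrow> real \<Rightarrow> bool" where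
  "is_solution a x T = (\<forall>t\<in>{0..T}. (x has_vector_derivative field a (x t)) (at t within {0..T}))"

definition first_integral :: "real^('n::{finite,linorder}) \<Rightarrow> (real^('n::{finite,linorder}) \<Rightarrow> 'b) \<Rightarrow> bool" where
  "first_integral a I = (\<forall>x T. 0 \<le> T \<longrightarrow> is_solution a x T \<longrightarrow> I (x T) = I (x 0))"

definition ffun :: "real \<Rightarrow> real \<Rightarrow> real" where
  "ffun h t = (if h \<noteq> 0 then tanh (h * t / 2) / h else t / 2)"

end

theory Submission
  imports Defs
begin

text \<open>For every down-closed index set S the partial sum v = \<Sum>j\<in>S. a_j x_j obeys the
  logistic equation v' = v (h - v), where h = H(x) is conserved; hence
  v(t) (1 + v(0) E(t)) = v(0) e^{h t} with E(t) = (e^{h t} - 1)/h. Since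
  x_i'/x_i = (h - v_i) - v_{i-1}, integrating gives
  x_i(t) (1 + v_i(0) E(t)) (1 + v_{i-1}(0) E(t)) = x_i(0) e^{h t}. The condition f(t) = eps
  says precisely (1 - h eps) E(t) = 2 eps and (1 - h eps) e^{h t} = 1 + h eps, and substituting
  these turns the closed form into the Kahan map. Because h is conserved, the same time step
  works at every point of the orbit, which gives the iterates.\<close>

definition partial_ham ::
    "real^('n::{finite,linorder}) \<Rightarrow> ('n::{finite,linorder}) set \<Rightarrow> real^('n::{finite,linorder}) \<Rightarrow> real"
  where
  "partial_ham a S y = (\<Sum>j\<in>S. a$j * y$j)"

definition down_closed :: "'a::linorder set \<Rightarrow> bool" where
  "down_closed S \<longleftrightarrow> (\<forall>j\<in>S. \<forall>k<j. k \<in> S)"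

lemma down_closed_atMost: "down_closed {..i}"
  and down_closed_lessThan: "down_closed {..<i}"
  and down_closed_UNIV: "down_closed UNIV"
  by (auto simp: down_closed_def)

lemma Ham_eq_partial_ham: "Ham a y = partial_ham a UNIV y"
  by (simp add: Ham_def partial_ham_def)

lemma vle_eq_partial_ham: "vle a y i = partial_ham a {..i} y"
  and vlt_eq_partial_ham: "vlt a y i = partial_ham a {..<i} y"
  by (simp_all add: vle_def vlt_def partial_ham_def atMost_def lessThan_def)

lemma Ham_split: "Ham a y = partial_ham a S y + partial_ham a (- S) y"
  unfolding Ham_def partial_ham_def
  by (metis add.commute finite sum.subset_diff top_greatest Compl_eq_Diff_UNIV)

lemma field_nth: "field a y $ i = y$i * (partial_ham a {i<..} y - partial_ham a {..<i} y)"
  by (simp add: field_def partial_ham_def greaterThan_def lessThan_def)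

text \<open>Inside a down-closed S every cross term p j p k with j, k \<in> S occurs once with each
  sign, so only the pairs leaving S survive.\<close>
lemma sum_up_minus_down_down_closed:
  fixes p :: "'n::{finite,linorder} \<Rightarrow> 'a::comm_ring"
  assumes "down_closed S"
  shows "(\<Sum>j\<in>S. p j * (sum p {j<..} - sum p {..<j})) = sum p S * sum p (- S)"
proof -
  have above: "sum p {j<..} = sum p (- S) + (\<Sum>k\<in>{k\<in>S. j < k}. p k)"
    and below: "{..<j} = {k\<in>S. k < j}" if "j \<in> S" for j
  proof -
    have "{j<..} = - S \<union> {k\<in>S. j < k}"
      using assms that unfolding down_closed_def by (auto simp: not_less) (metis linorder_neqE)
    then show "sum p {j<..} = sum p (- S) + (\<Sum>k\<in>{k\<in>S. j < k}. p k)"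
      by (simp add: sum.union_disjoint disjoint_iff)
    show "{..<j} = {k\<in>S. k < j}"
      using assms that unfolding down_closed_def by auto
  qed
  have swap: "(\<Sum>j\<in>S. \<Sum>k\<in>{k\<in>S. j < k}. p j * p k)
      = (\<Sum>j\<in>S. \<Sum>k\<in>{k\<in>S. k < j}. p j * p k)"
    by (subst sum.swap_restrict) (auto simp: mult.commute)
  have "(\<Sum>j\<in>S. p j * (sum p {j<..} - sum p {..<j}))
      = (\<Sum>j\<in>S. p j * sum p (- S) + (\<Sum>k\<in>{k\<in>S. j < k}. p j * p k)
                 - (\<Sum>k\<in>{k\<in>S. k < j}. p j * p k))"
    by (rule sum.cong) (auto simp: above below algebra_simps sum_distrib_left)
  also have "\<dots> = sum p S * sum p (- S)"
    by (simp add: sum.distrib sum_subtractf swap sum_distrib_right)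
  finally show ?thesis .
qed

lemma has_vector_derivative_vec_nth:
  assumes "(x has_vector_derivative x') F"
  shows "((\<lambda>t. x t $ i) has_real_derivative x' $ i) F"
  using bounded_linear.has_vector_derivative[OF bounded_linear_vec_nth assms]
  by (simp add: has_real_derivative_iff_has_vector_derivative)

lemma partial_ham_has_derivative:
  assumes "is_solution a x T" "t \<in> {0..T}" "down_closed S"
  shows "((\<lambda>t. partial_ham a S (x t)) has_real_derivative
           partial_ham a S (x t) * partial_ham a (- S) (x t)) (at t within {0..T})"
proof -
  have "(x has_vector_derivative field a (x t)) (at t within {0..T})"
    using assms unfolding is_solution_def by auto
  then have "((\<lambda>t. partial_ham a S (x t)) has_real_derivative (\<Sum>j\<in>S. a$j * field a (x t) $ j))
      (at t within {0..T})"
    unfolding partial_ham_def by (intro DERIV_sum DERIV_cmult has_vector_derivative_vec_nth)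
  moreover have "(\<Sum>j\<in>S. a$j * field a (x t) $ j) = partial_ham a S (x t) * partial_ham a (- S) (x t)"
    using sum_up_minus_down_down_closed[OF assms(3), of "\<lambda>j. a$j * x t $ j"]
    by (simp add: field_nth partial_ham_def mult.assoc)
  ultimately show ?thesis by simp
qed

lemma Ham_conserved:
  assumes "is_solution a x T" "t \<in> {0..T}"
  shows "Ham a (x t) = Ham a (x 0)"
proof -
  have "((\<lambda>t. Ham a (x t)) has_real_derivative 0) (at s within {0..T})" if "s \<in> {0..T}" for s
    using partial_ham_has_derivative[OF assms(1) that down_closed_UNIV]
    by (simp add: Ham_eq_partial_ham partial_ham_def)
  then obtain c where "\<forall>s\<in>{0..T}. Ham a (x s) = c"
    using has_field_derivative_zero_constant[of "{0..T}"] by blast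
  then show ?thesis using assms(2) by auto
qed

lemma linear_ode_zero_initial_value:
  fixes \<phi> c :: "real \<Rightarrow> real"
  assumes deriv: "\<And>s. s \<in> {0..T} \<Longrightarrow> (\<phi> has_real_derivative c s * \<phi> s) (at s within {0..T})"
    and bounded: "\<And>s. s \<in> {0..T} \<Longrightarrow> c s \<le> K" and "\<phi> 0 = 0" and t: "t \<in> {0..T}"
  shows "\<phi> t = 0"
proof -
  define g where "g s = (\<phi> s)\<^sup>2 * exp (-(2*K) * s)" for s
  define g' where "g' s = 2 * (\<phi> s)\<^sup>2 * (c s - K) * exp (-(2*K) * s)" for s
  have "\<exists>s\<in>{0..t}. g t - g 0 = g' s * (t - 0)"
  proof (rule mvt_very_simple)
    fix s assume "0 \<le> s" "s \<le> t"
    then have "(g has_real_derivative g' s) (at s within {0..T})"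
      using deriv[of s] t unfolding g_def g'_def
      by (auto intro!: derivative_eq_intros simp: power2_eq_square algebra_simps)
    then show "(g has_derivative (*) (g' s)) (at s within {0..t})"
      unfolding has_field_derivative_def by (rule has_derivative_subset) (use t in auto)
  qed (use t in auto)
  then obtain s where s: "s \<in> {0..t}" "g t - g 0 = g' s * t" by auto
  have "g' s \<le> 0"
    using bounded[of s] s t unfolding g'_def by (intro mult_nonpos_nonneg mult_nonneg_nonpos) auto
  with s t \<open>\<phi> 0 = 0\<close> have "g t \<le> 0"
    by (simp add: g_def mult_nonpos_nonneg)
  then show ?thesis by (simp add: g_def mult_le_0_iff)
qed

text \<open>int_exp h t is the integral of exp (h s) over [0, t].\<close>
definition int_exp :: "real \<Rightarrow> real \<Rightarrow> real" where
  "int_exp h t = (if h = 0 then t else (exp (h * t) - 1) / h)"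

lemma int_exp_0 [simp]: "int_exp h 0 = 0"
  by (simp add: int_exp_def)

lemma int_exp_has_derivative: "(int_exp h has_real_derivative exp (h * t)) (at t within S)"
  unfolding int_exp_def [abs_def]
  by (cases "h = 0") (auto intro!: derivative_eq_intros)

text \<open>v = partial_ham a S solves the logistic equation v' = v (h - v); the difference of the two
  sides below solves the linear equation \<phi>' = (h - v) \<phi>, so it vanishes by Gronwall.\<close>
lemma partial_ham_logistic:
  assumes sol: "is_solution a x T" and "down_closed S" and t: "t \<in> {0..T}"
  shows "partial_ham a S (x t) * (1 + partial_ham a S (x 0) * int_exp (Ham a (x 0)) t)
       = partial_ham a S (x 0) * exp (Ham a (x 0) * t)"
proof -
  define h where "h = Ham a (x 0)"
  define v where "v s = partial_ham a S (x s)" for s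
  have v_deriv: "(v has_real_derivative v s * (h - v s)) (at s within {0..T})" if "s \<in> {0..T}" for s
    using partial_ham_has_derivative[OF sol that \<open>down_closed S\<close>] Ham_split[of a "x s" S]
      Ham_conserved[OF sol that]
    by (simp add: h_def v_def [abs_def])
  have "continuous (at s within {0..T}) v" if "s \<in> {0..T}" for s
    using v_deriv[OF that] by (rule DERIV_continuous)
  then have "continuous_on {0..T} (\<lambda>s. h - v s)"
    by (intro continuous_intros) (simp add: continuous_on_eq_continuous_within)
  then have "bounded ((\<lambda>s. h - v s) ` {0..T})"
    by (intro compact_imp_bounded compact_continuous_image) auto
  then obtain K where K: "\<And>s. s \<in> {0..T} \<Longrightarrow> norm (h - v s) \<le> K"
    unfolding bounded_iff by blast
  define \<phi> where "\<phi> s = v s * (1 + v 0 * int_exp h s) - v 0 * exp (h * s)" for s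
  have "\<phi> t = 0"
  proof (rule linear_ode_zero_initial_value[where \<phi> = \<phi> and c = "\<lambda>s. h - v s" and K = K])
    fix s assume s: "s \<in> {0..T}"
    show "(\<phi> has_real_derivative (h - v s) * \<phi> s) (at s within {0..T})"
      unfolding \<phi>_def [abs_def]
      by (rule derivative_eq_intros v_deriv[OF s] int_exp_has_derivative refl)+
        (simp add: algebra_simps)
    show "h - v s \<le> K" using K[OF s] by simp
  qed (use t in \<open>simp_all add: \<phi>_def\<close>)
  then show ?thesis by (simp add: \<phi>_def v_def h_def)
qed

lemma solution_component_closed_form:
  assumes sol: "is_solution a x T" and t: "t \<in> {0..T}"
  shows "x t $ i * (1 + vle a (x 0) i * int_exp (Ham a (x 0)) t)
           * (1 + vlt a (x 0) i * int_exp (Ham a (x 0)) t)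
       = x 0 $ i * exp (Ham a (x 0) * t)"
proof -
  define h where "h = Ham a (x 0)"
  define P where "P s = 1 + vle a (x 0) i * int_exp h s" for s
  define Q where "Q s = 1 + vlt a (x 0) i * int_exp h s" for s
  define \<psi> where "\<psi> s = x s $ i * P s * Q s * exp (- (h * s))" for s
  have "(\<psi> has_real_derivative 0) (at s within {0..T})" if s: "s \<in> {0..T}" for s
  proof -
    have x_deriv: "((\<lambda>s. x s $ i) has_real_derivative field a (x s) $ i) (at s within {0..T})"
      using sol s unfolding is_solution_def by (blast intro: has_vector_derivative_vec_nth)
    have le: "partial_ham a {..i} (x s) * P s = vle a (x 0) i * exp (h * s)"
      and lt: "partial_ham a {..<i} (x s) * Q s = vlt a (x 0) i * exp (h * s)"
      using partial_ham_logistic[OF sol down_closed_atMost s]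
        partial_ham_logistic[OF sol down_closed_lessThan s]
      by (simp_all add: vle_eq_partial_ham vlt_eq_partial_ham P_def Q_def h_def)
    have h_split: "h = partial_ham a {..i} (x s) + partial_ham a {i<..} (x s)"
      using Ham_split[of a "x s" "{..i}"] Ham_conserved[OF sol s] by (simp add: h_def)
    have "(\<psi> has_real_derivative exp (- (h * s)) * (field a (x s) $ i * P s * Q s
        + x s $ i * (vle a (x 0) i * exp (h * s)) * Q s + x s $ i * P s * (vlt a (x 0) i * exp (h * s))
        - h * (x s $ i * P s * Q s))) (at s within {0..T})"
      unfolding \<psi>_def [abs_def] P_def Q_def
      by (rule derivative_eq_intros x_deriv int_exp_has_derivative refl)+ (simp add: algebra_simps)
    moreover have "field a (x s) $ i * P s * Q s + x s $ i * (vle a (x 0) i * exp (h * s)) * Q s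
        + x s $ i * P s * (vlt a (x 0) i * exp (h * s)) - h * (x s $ i * P s * Q s) = 0"
      unfolding le [symmetric] lt [symmetric] unfolding field_nth h_split by (simp add: algebra_simps)
    ultimately show ?thesis by simp
  qed
  then obtain c where "\<forall>s\<in>{0..T}. \<psi> s = c"
    using has_field_derivative_zero_constant[of "{0..T}" \<psi>] by auto
  then have "\<psi> t = \<psi> 0" using t by auto
  then have "x t $ i * P t * Q t * exp (- (h * t)) = x 0 $ i"
    by (simp add: \<psi>_def P_def Q_def)
  then have "x t $ i * P t * Q t = x 0 $ i * exp (h * t)"
    by (simp add: exp_minus field_simps)
  then show ?thesis by (simp add: P_def Q_def h_def)
qed

lemma ffun_pos_imp_pos:
  assumes "ffun h T = eps" and "eps > 0"
  shows "T > 0"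
  using assms
  by (auto simp: ffun_def zero_less_divide_iff zero_less_mult_iff mult_less_0_iff split: if_splits)

lemma ffun_step_relations:
  assumes "ffun h T = eps"
  shows "1 - h * eps > 0" and "(1 - h * eps) * exp (h * T) = 1 + h * eps"
    and "(1 - h * eps) * int_exp h T = 2 * eps"
proof -
  have "1 - h * eps > 0 \<and> (1 - h * eps) * exp (h * T) = 1 + h * eps
      \<and> (1 - h * eps) * int_exp h T = 2 * eps"
  proof (cases "h = 0")
    case True
    then show ?thesis using assms by (simp add: ffun_def int_exp_def)
  next
    case False
    define u where "u = exp (- (h * T))"
    have u: "u > 0" "u * exp (h * T) = 1"
      by (simp_all add: u_def flip: exp_add)
    have eps: "eps = (1 - u) / ((1 + u) * h)"
      using assms False by (simp add: ffun_def tanh_real_altdef u_def)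
    then have h_eps: "h * eps = (1 - u) / (1 + u)"
      using False by simp
    show ?thesis
      using u False unfolding h_eps by (simp add: eps int_exp_def field_simps)
  qed
  then show "1 - h * eps > 0" and "(1 - h * eps) * exp (h * T) = 1 + h * eps"
    and "(1 - h * eps) * int_exp h T = 2 * eps" by auto
qed

lemma solution_eq_kahan:
  assumes sol: "is_solution a x T" and "0 \<le> T" and step: "ffun (Ham a (x 0)) T = eps"
    and defined: "kahan_defined a eps (x 0)"
  shows "x T = kahan a eps (x 0)"
  unfolding vec_eq_iff
proof
  fix i
  define h where "h = Ham a (x 0)"
  define r where "r = 1 - h * eps"
  define E where "E = int_exp h T"
  define p where "p = vle a (x 0) i"
  define q where "q = vlt a (x 0) i"
  note rel = ffun_step_relations[OF step, folded h_def, folded r_def E_def]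
  have closed: "x T $ i * (1 + p * E) * (1 + q * E) = x 0 $ i * exp (h * T)"
    using solution_component_closed_form[OF sol] \<open>0 \<le> T\<close> by (simp add: h_def E_def p_def q_def)
  have den: "1 - eps * h + 2 * eps * c = r * (1 + c * E)" for c
  proof -
    have "r * (1 + c * E) = r + c * (r * E)" by (simp add: algebra_simps)
    also have "\<dots> = 1 - eps * h + 2 * eps * c" unfolding rel(3) by (simp add: r_def)
    finally show ?thesis ..
  qed
  have num: "(1 - eps * h) * (1 + eps * h) = r * (r * exp (h * T))"
    using rel(2) by (simp add: r_def mult.commute)
  have "1 + p * E \<noteq> 0" "1 + q * E \<noteq> 0"
    using defined den unfolding kahan_defined_def h_def p_def q_def by (metis mult_zero_right)+
  then have "kahan a eps (x 0) $ i = x 0 $ i * exp (h * T) / ((1 + q * E) * (1 + p * E))"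
    using rel(1) by (simp add: kahan_def num den flip: h_def p_def q_def)
  also have "\<dots> = x T $ i"
    unfolding closed [symmetric] using \<open>1 + p * E \<noteq> 0\<close> \<open>1 + q * E \<noteq> 0\<close> by simp
  finally show "x T $ i = kahan a eps (x 0) $ i" ..
qed

lemma is_solution_mono:
  assumes "is_solution a x T'" and "T \<le> T'"
  shows "is_solution a x T"
  unfolding is_solution_def
proof
  fix t assume "t \<in> {0..T}"
  then have "(x has_vector_derivative field a (x t)) (at t within {0..T'})"
    using assms unfolding is_solution_def by auto
  then show "(x has_vector_derivative field a (x t)) (at t within {0..T})"
    by (rule has_vector_derivative_within_subset) (use assms(2) in auto)
qed

lemma is_solution_shift:
  assumes sol: "is_solution a x T'" and "0 \<le> c" and "c + T \<le> T'"
  shows "is_solution a (\<lambda>s. x (c + s)) T"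
  unfolding is_solution_def
proof
  fix s assume s: "s \<in> {0..T}"
  have shift: "((+) c has_vector_derivative 1) (at s within {0..T})"
    by (auto intro!: derivative_eq_intros)
  have "(x has_vector_derivative field a (x (c + s))) (at (c + s) within {0..T'})"
    using sol s assms unfolding is_solution_def by auto
  then have "(x has_vector_derivative field a (x (c + s))) (at (c + s) within (+) c ` {0..T})"
    by (rule has_vector_derivative_within_subset) (use assms in auto)
  from vector_diff_chain_within[OF shift this]
  show "((\<lambda>s. x (c + s)) has_vector_derivative field a (x (c + s))) (at s within {0..T})"
    by (simp add: o_def)
qed

text \<open>Since T depends on the initial point only through the conserved Ham, one time step T
  of the flow is one Kahan step everywhere along the orbit.\<close>
lemma kahan_iterate_eq_solution:
  assumes step: "ffun (Ham a x0) T = eps" and "eps > 0"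
    and sol: "is_solution a x (real m * T)" and "x 0 = x0"
    and defined: "\<forall>k<m. kahan_defined a eps ((kahan a eps ^^ k) x0)"
  shows "(kahan a eps ^^ m) x0 = x (real m * T)"
  using sol defined
proof (induction m)
  case 0
  then show ?case using \<open>x 0 = x0\<close> by simp
next
  case (Suc m)
  have "T > 0" using ffun_pos_imp_pos[OF step \<open>eps > 0\<close>] .
  have IH: "(kahan a eps ^^ m) x0 = x (real m * T)"
    using Suc.IH is_solution_mono[OF Suc.prems(1)] Suc.prems(2) \<open>T > 0\<close> by simp
  have shifted: "is_solution a (\<lambda>s. x (real m * T + s)) T"
    by (rule is_solution_shift[OF Suc.prems(1)]) (use \<open>T > 0\<close> in \<open>auto simp: algebra_simps\<close>)
  have "Ham a (x (real m * T)) = Ham a x0"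
    using Ham_conserved[OF Suc.prems(1)] \<open>T > 0\<close> \<open>x 0 = x0\<close> by simp
  moreover have "kahan_defined a eps (x (real m * T))"
    using Suc.prems(2) IH by auto
  ultimately have "x (real m * T + T) = kahan a eps (x (real m * T))"
    using solution_eq_kahan[OF shifted] step \<open>T > 0\<close> by simp
  then show ?case using IH by (simp add: algebra_simps)
qed

theorem mainTheorem9:
  fixes a x0 :: "real^('n::{finite,linorder})" and eps teps :: real
  assumes "a \<noteq> 0" and "eps > 0" and "ffun (Ham a x0) teps = eps"
  shows "(\<forall>x. is_solution a x teps \<and> x 0 = x0 \<and> kahan_defined a eps x0
              \<longrightarrow> x teps = kahan a eps x0)
       \<and> (\<forall>(m::nat) x. is_solution a x (real m * teps) \<and> x 0 = x0 \<and>
              (\<forall>k<m. kahan_defined a eps ((kahan a eps ^^ k) x0))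
              \<longrightarrow> (kahan a eps ^^ m) x0 = x (real m * teps))
       \<and> (\<forall>(I :: real^('n::{finite,linorder}) \<Rightarrow> real) x. first_integral a I \<and> is_solution a x teps \<and> x 0 = x0
              \<and> kahan_defined a eps x0 \<longrightarrow> I (kahan a eps x0) = I x0)"
proof -
  have "teps > 0" using ffun_pos_imp_pos[OF assms(3,2)] .
  have one_step: "x teps = kahan a eps x0"
    if "is_solution a x teps" "x 0 = x0" "kahan_defined a eps x0" for x
    using solution_eq_kahan[of a x teps eps] that assms(3) \<open>teps > 0\<close> by simp
  moreover have "I (kahan a eps x0) = I x0"
    if "first_integral a I" "is_solution a x teps" "x 0 = x0" "kahan_defined a eps x0"
    for I :: "real^('n::{finite,linorder}) \<Rightarrow> real" and x
  proof -
    have "I (x teps) = I (x 0)"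
      using that(1,2) \<open>teps > 0\<close> unfolding first_integral_def by (simp add: less_imp_le)
    then show ?thesis using one_step[OF that(2-4)] that(3) by simp
  qed
  ultimately show ?thesis
    using kahan_iterate_eq_solution[OF assms(3,2)] by blast
qed

end
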